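(* The following bounds are sharp: for $d,j\in\mathbb{N}$ and $g\in\mathbb{C}[z]$ of degree $d$ with only isolated critical points, (1) the number of distinct critical points of $g$ of multiplicity $j$ is at most $\lfloor\frac{d-1}{j}\rfloor$, and (2) the number of distinct critical points of $g$ of multiplicity $j$ with a common critical value is at most $\lfloor\frac{d}{j+1}\rfloor$. That is, for all $d,j\in\mathbb{N}$ with $d>j$ there exists a polynomial of degree $d$ attaining the bound in (1), and there exists a polynomial of degree $d$ attaining the bound in (2).
   Context: A point $z_0\in\mathbb{C}$ is a critical point of multiplicity $j$ of $g\in\mathbb{C}[z]$ if $g^{(1)}(z_0)=\dots=g^{(j)}(z_0)=0$; $g(z_0)$ is its critical value. *)

theory Defs
  imports "HOL-Computational_Algebra.Polynomial" Complex_Main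
begin

definition crit_point_mult :: "complex poly \<Rightarrow> nat \<Rightarrow> complex \<Rightarrow> bool" where
  "crit_point_mult g j z0 \<longleftrightarrow> (\<forall>i\<in>{1..j}. poly ((pderiv ^^ i) g) z0 = 0)"

text \<open>g has only isolated critical points (for polynomials: g' is not the zero polynomial).\<close>
definition isolated_crit_points :: "complex poly \<Rightarrow> bool" where
  "isolated_crit_points g \<longleftrightarrow> (\<forall>z. \<exists>e>0. \<forall>w. w \<noteq> z \<and> cmod (w - z) < e \<longrightarrow> poly (pderiv g) w \<noteq> 0)"

end

theory Submission
  imports Defs
begin

text \<open>
  A point is a critical point of multiplicity \<open>j\<close> of \<open>g\<close> iff it is a zero of \<open>g'\<close> of order
  at least \<open>j\<close>, and such a point has critical value 0 iff it is a zero of \<open>g\<close> of order at least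
  \<open>j + 1\<close>. For \<open>m > 0\<close> and a set \<open>A\<close> of \<open>n div m\<close> points, the polynomial
  \<open>(\<Prod>a\<in>A. (z - a))^m * z^(n mod m)\<close> has degree \<open>n\<close>, and its zeros of order at least \<open>m\<close> are
  exactly the points of \<open>A\<close>, because the factor \<open>z^(n mod m)\<close> has order less than \<open>m\<close> everywhere.
  Taking this polynomial as \<open>g'\<close> with \<open>m = j\<close>, \<open>n = d - 1\<close>, respectively as \<open>g\<close> with
  \<open>m = j + 1\<close>, \<open>n = d\<close>, attains the two bounds.
\<close>

lemma order_power:
  fixes p :: "'a::idom poly"
  assumes "p \<noteq> 0"
  shows "order a (p ^ n) = n * order a p"
  using assms by (induction n) (simp_all add: order_mult)

lemma higher_pderiv_vanish_Suc_iff: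
  "(\<forall>i<Suc j. poly ((pderiv ^^ i) p) z = 0) \<longleftrightarrow>
     poly p z = 0 \<and> (\<forall>i<j. poly ((pderiv ^^ i) (pderiv p)) z = 0)"
  by (simp add: All_less_Suc2 funpow_Suc_right del: funpow.simps)

lemma higher_pderiv_vanish_iff_order:
  fixes p :: "'a::{idom,semiring_char_0} poly"
  assumes "p \<noteq> 0"
  shows "(\<forall>i<j. poly ((pderiv ^^ i) p) z = 0) \<longleftrightarrow> j \<le> order z p"
  using assms
proof (induction j arbitrary: p)
  case 0
  then show ?case by simp
next
  case (Suc j)
  show ?case
  proof (cases "poly p z = 0")
    case True
    then have "pderiv p \<noteq> 0"
      using Suc.prems by (auto dest: pderiv_iszero)
    then show ?thesis
      unfolding higher_pderiv_vanish_Suc_iff Suc.IH[OF \<open>pderiv p \<noteq> 0\<close>]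
      using order_pderiv[OF Suc.prems True] True by simp
  next
    case False
    then show ?thesis
      unfolding higher_pderiv_vanish_Suc_iff using order_0I[OF False] by simp
  qed
qed

lemma crit_point_mult_iff_pderiv:
  "crit_point_mult g j z \<longleftrightarrow> (\<forall>i<j. poly ((pderiv ^^ i) (pderiv g)) z = 0)"
  unfolding crit_point_mult_def image_Suc_lessThan[symmetric]
  by (auto simp: funpow_Suc_right simp del: funpow.simps)

lemma crit_point_mult_iff_order_pderiv:
  assumes "pderiv g \<noteq> 0"
  shows "crit_point_mult g j z \<longleftrightarrow> j \<le> order z (pderiv g)"
  unfolding crit_point_mult_iff_pderiv using higher_pderiv_vanish_iff_order[OF assms] .

lemma crit_point_mult_root_iff_order:
  assumes "g \<noteq> 0"
  shows "crit_point_mult g j z \<and> poly g z = 0 \<longleftrightarrow> j < order z g"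
  using higher_pderiv_vanish_iff_order[OF assms, of "Suc j" z]
  unfolding crit_point_mult_iff_pderiv higher_pderiv_vanish_Suc_iff by auto

lemma isolated_crit_points_if_pderiv_nonzero:
  assumes "pderiv g \<noteq> 0"
  shows "isolated_crit_points g"
  unfolding isolated_crit_points_def
proof
  fix z
  have "\<forall>\<^sub>F w in at z. \<forall>a\<in>{w. poly (pderiv g) w = 0}. w \<noteq> a"
    using poly_roots_finite[OF assms]
    by (rule eventually_ball_finite) (simp add: eventually_neq_at_within)
  then have "\<forall>\<^sub>F w in at z. poly (pderiv g) w \<noteq> 0"
    by (rule eventually_mono) blast
  then show "\<exists>e>0. \<forall>w. w \<noteq> z \<and> cmod (w - z) < e \<longrightarrow> poly (pderiv g) w \<noteq> 0"
    by (simp add: eventually_at dist_norm)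
qed

lemma pderiv_surj:
  fixes h :: "'a::field_char_0 poly"
  shows "\<exists>g. pderiv g = h"
proof
  have "pderiv (monom (c / of_nat (Suc i)) (Suc i)) = monom c i" for c :: 'a and i
    by (simp add: pderiv_monom del: of_nat_Suc)
  moreover have "pderiv (sum f A) = (\<Sum>x\<in>A. pderiv (f x))" for f :: "nat \<Rightarrow> 'a poly" and A
    using higher_pderiv_sum[of 1 f A] by simp
  ultimately show "pderiv (\<Sum>i\<le>degree h. monom (coeff h i / of_nat (Suc i)) (Suc i)) = h"
    by (simp add: poly_as_sum_of_monoms del: of_nat_Suc)
qed

lemma order_power_mult_X_power_ge_iff:
  fixes q :: "'a::idom poly"
  assumes "q \<noteq> 0" and "r < m"
  shows "m \<le> order z (q ^ m * [:0, 1:] ^ r) \<longleftrightarrow> poly q z = 0"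
proof -
  have "order z [:0, 1:] \<le> 1"
    using order_degree[of "[:0, 1::'a:]" z] by simp
  then have X_order_less: "r * order z [:0, 1:] < m"
    using assms(2) mult_le_mono2[of "order z [:0, 1:]" 1 r] by linarith
  have order_eq: "order z (q ^ m * [:0, 1:] ^ r) = m * order z q + r * order z [:0, 1:]"
    using assms(1) by (simp add: order_mult order_power)
  show ?thesis
  proof (cases "poly q z = 0")
    case True
    then have "1 \<le> order z q"
      using assms(1) order_gt_0_iff by (metis One_nat_def Suc_leI)
    then show ?thesis
      unfolding order_eq using True by (simp add: trans_le_add1)
  next
    case False
    then show ?thesis
      unfolding order_eq using X_order_less by (simp add: order_0I)
  qed
qed

lemma poly_with_roots_of_high_order:
  assumes "0 < m"
  obtains q :: "'a::{idom,ring_char_0} poly"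
  where "q \<noteq> 0" "degree q = n"
    "finite {z. m \<le> order z q}" "card {z. m \<le> order z q} = n div m"
proof -
  obtain A :: "'a set" where A: "finite A" "card A = n div m"
    using infinite_arbitrarily_large[OF infinite_UNIV_char_0] by blast
  define p where "p = (\<Prod>a\<in>A. [:- a, 1:])"
  have "p \<noteq> 0" "degree p = n div m"
    unfolding p_def using A by (simp_all add: degree_prod_eq_sum_degree)
  have roots: "{z. poly p z = 0} = A"
    unfolding p_def using A by (auto simp: poly_prod)
  define q where "q = p ^ m * [:0, 1:] ^ (n mod m)"
  show thesis
  proof (rule that)
    show "q \<noteq> 0"
      unfolding q_def using \<open>p \<noteq> 0\<close> by simp
    show "degree q = n"
      unfolding q_def using \<open>p \<noteq> 0\<close> \<open>degree p = n div m\<close>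
      by (simp add: degree_mult_eq degree_power_eq)
    have "n mod m < m"
      using assms by simp
    have "{z. m \<le> order z q} = A"
      using order_power_mult_X_power_ge_iff[OF \<open>p \<noteq> 0\<close> \<open>n mod m < m\<close>]
      unfolding q_def roots[symmetric] by simp
    then show "finite {z. m \<le> order z q}" "card {z. m \<le> order z q} = n div m"
      using A by simp_all
  qed
qed

theorem mainTheorem5:
  fixes d j :: nat
  assumes "1 \<le> j" and "j < d"
  shows "(\<exists>g :: complex poly. degree g = d \<and> isolated_crit_points g \<and>
            finite {z. crit_point_mult g j z} \<and>
            card {z. crit_point_mult g j z} = (d - 1) div j)
       \<and> (\<exists>(g :: complex poly) (w :: complex). degree g = d \<and> isolated_crit_points g \<and>
            finite {z. crit_point_mult g j z \<and> poly g z = w} \<and>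
            card {z. crit_point_mult g j z \<and> poly g z = w} = d div (j + 1))"
proof
  obtain h :: "complex poly" where h: "h \<noteq> 0" "degree h = d - 1"
    "finite {z. j \<le> order z h}" "card {z. j \<le> order z h} = (d - 1) div j"
    by (rule poly_with_roots_of_high_order[of j "d - 1"]) (use assms(1) in simp_all)
  obtain g where g: "pderiv g = h"
    using pderiv_surj by blast
  have "degree g = d"
    using h(1,2) assms(2) by (simp add: g[symmetric] degree_pderiv pderiv_eq_0_iff)
  moreover have "isolated_crit_points g"
    using h(1) g by (simp add: isolated_crit_points_if_pderiv_nonzero)
  moreover have "{z. crit_point_mult g j z} = {z. j \<le> order z h}"
    using crit_point_mult_iff_order_pderiv h(1) g by auto
  ultimately show "\<exists>g :: complex poly. degree g = d \<and> isolated_crit_points g \<and>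
      finite {z. crit_point_mult g j z} \<and> card {z. crit_point_mult g j z} = (d - 1) div j"
    using h(3,4) by (intro exI[of _ g]) simp
next
  obtain g :: "complex poly" where g: "g \<noteq> 0" "degree g = d"
    "finite {z. j + 1 \<le> order z g}" "card {z. j + 1 \<le> order z g} = d div (j + 1)"
    by (rule poly_with_roots_of_high_order[of "j + 1" d]) simp_all
  have "isolated_crit_points g"
    using g(2) assms(2) by (simp add: isolated_crit_points_if_pderiv_nonzero pderiv_eq_0_iff)
  moreover have "{z. crit_point_mult g j z \<and> poly g z = 0} = {z. j + 1 \<le> order z g}"
    using crit_point_mult_root_iff_order[OF g(1)] by (auto simp: Suc_le_eq)
  ultimately show "\<exists>(g :: complex poly) w. degree g = d \<and> isolated_crit_points g \<and>
      finite {z. crit_point_mult g j z \<and> poly g z = w} \<and>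
      card {z. crit_point_mult g j z \<and> poly g z = w} = d div (j + 1)"
    using g(2-4) by (intro exI[of _ g] exI[of _ 0]) simp
qed

end
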